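(* Let $L$ be a finite-dimensional Lie algebra over a field $F$ and let $Q$ be a strong quasi-ideal of $L$. Then either $Q$ is a strong ideal of $L$, or $L$ is almost abelian, or $F$ has characteristic two and there is an isomorphism $L\cong K$ carrying $Q$ onto $Fc$.
   Context: $K$ denotes the three-dimensional Lie algebra with basis $a,b,c$ and products $[a,b]=c$, $[b,c]=b$, $[a,c]=a$. A subalgebra $Q$ is a quasi-ideal of $L$ if $[Q,V]\subseteq Q+V$ for every subspace $V$ of $L$. A subalgebra $U$ of $L$ is a strong ideal (respectively strong quasi-ideal) of $L$ if every one-dimensional subalgebra of $U$ is an ideal (respectively quasi-ideal) of $L$. $L$ is almost abelian if $L=L^2\oplus Fx$ for some $x$, where $L^2=[L,L]$ is abelian and $\mathrm{ad}\,x$ acts as the identity map on $L^2$. *)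

theory Defs
  imports Main HOL.Vector_Spaces "HOL-Library.Product_Plus"
begin

definition lie_algebra :: "('a::field \<Rightarrow> 'v::ab_group_add \<Rightarrow> 'v) \<Rightarrow> ('v \<Rightarrow> 'v \<Rightarrow> 'v) \<Rightarrow> bool" where
  "lie_algebra scale br \<longleftrightarrow>
     vector_space scale \<and>
     (\<forall>x y z. br (x + y) z = br x z + br y z) \<and>
     (\<forall>x y z. br x (y + z) = br x y + br x z) \<and>
     (\<forall>r x y. br (scale r x) y = scale r (br x y)) \<and>
     (\<forall>r x y. br x (scale r y) = scale r (br x y)) \<and>
     (\<forall>x. br x x = 0) \<and>
     (\<forall>x y z. br x (br y z) + br y (br z x) + br z (br x y) = 0)"

definition fin_dim :: "('a::field \<Rightarrow> 'v::ab_group_add \<Rightarrow> 'v) \<Rightarrow> bool" where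
  "fin_dim scale \<longleftrightarrow> (\<exists>B. finite B \<and> module.span scale B = UNIV)"

definition brk_sp :: "('a::field \<Rightarrow> 'v::ab_group_add \<Rightarrow> 'v) \<Rightarrow> ('v \<Rightarrow> 'v \<Rightarrow> 'v) \<Rightarrow> 'v set \<Rightarrow> 'v set \<Rightarrow> 'v set" where
  "brk_sp scale br U V = module.span scale {br u v | u v. u \<in> U \<and> v \<in> V}"

definition sum_sp :: "'v::ab_group_add set \<Rightarrow> 'v set \<Rightarrow> 'v set" where
  "sum_sp U V = {u + v | u v. u \<in> U \<and> v \<in> V}"

definition lie_subalgebra :: "('a::field \<Rightarrow> 'v::ab_group_add \<Rightarrow> 'v) \<Rightarrow> ('v \<Rightarrow> 'v \<Rightarrow> 'v) \<Rightarrow> 'v set \<Rightarrow> bool" where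
  "lie_subalgebra scale br U \<longleftrightarrow> module.subspace scale U \<and> (\<forall>x\<in>U. \<forall>y\<in>U. br x y \<in> U)"

definition lie_ideal :: "('a::field \<Rightarrow> 'v::ab_group_add \<Rightarrow> 'v) \<Rightarrow> ('v \<Rightarrow> 'v \<Rightarrow> 'v) \<Rightarrow> 'v set \<Rightarrow> bool" where
  "lie_ideal scale br I \<longleftrightarrow> module.subspace scale I \<and> brk_sp scale br UNIV I \<subseteq> I"

definition quasi_ideal :: "('a::field \<Rightarrow> 'v::ab_group_add \<Rightarrow> 'v) \<Rightarrow> ('v \<Rightarrow> 'v \<Rightarrow> 'v) \<Rightarrow> 'v set \<Rightarrow> bool" where
  "quasi_ideal scale br Q \<longleftrightarrow> lie_subalgebra scale br Q \<and>
     (\<forall>V. module.subspace scale V \<longrightarrow> brk_sp scale br Q V \<subseteq> sum_sp Q V)"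

definition one_dim_subalgebras :: "('a::field \<Rightarrow> 'v::ab_group_add \<Rightarrow> 'v) \<Rightarrow> ('v \<Rightarrow> 'v \<Rightarrow> 'v) \<Rightarrow> 'v set \<Rightarrow> 'v set set" where
  "one_dim_subalgebras scale br U =
     {W. W \<subseteq> U \<and> lie_subalgebra scale br W \<and> vector_space.dim scale W = 1}"

definition strong_ideal :: "('a::field \<Rightarrow> 'v::ab_group_add \<Rightarrow> 'v) \<Rightarrow> ('v \<Rightarrow> 'v \<Rightarrow> 'v) \<Rightarrow> 'v set \<Rightarrow> bool" where
  "strong_ideal scale br U \<longleftrightarrow> lie_subalgebra scale br U \<and>
     (\<forall>W\<in>one_dim_subalgebras scale br U. lie_ideal scale br W)"

definition strong_quasi_ideal :: "('a::field \<Rightarrow> 'v::ab_group_add \<Rightarrow> 'v) \<Rightarrow> ('v \<Rightarrow> 'v \<Rightarrow> 'v) \<Rightarrow> 'v set \<Rightarrow> bool" where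
  "strong_quasi_ideal scale br U \<longleftrightarrow> lie_subalgebra scale br U \<and>
     (\<forall>W\<in>one_dim_subalgebras scale br U. quasi_ideal scale br W)"

definition almost_abelian :: "('a::field \<Rightarrow> 'v::ab_group_add \<Rightarrow> 'v) \<Rightarrow> ('v \<Rightarrow> 'v \<Rightarrow> 'v) \<Rightarrow> bool" where
  "almost_abelian scale br \<longleftrightarrow>
     (let L2 = brk_sp scale br UNIV UNIV in
      \<exists>x. sum_sp L2 (module.span scale {x}) = UNIV \<and>
          L2 \<inter> module.span scale {x} = {0} \<and>
          (\<forall>u\<in>L2. \<forall>v\<in>L2. br u v = 0) \<and>
          (\<forall>u\<in>L2. br x u = u))"

text \<open>The algebra K on F^3 = F a + F b + F c (coordinates w.r.t. a, b, c):
 [a,b]=c, [b,c]=b, [a,c]=a.\<close>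
definition K_scale :: "'a::field \<Rightarrow> 'a \<times> 'a \<times> 'a \<Rightarrow> 'a \<times> 'a \<times> 'a" where
  "K_scale r x = (case x of (x1, x2, x3) \<Rightarrow> (r * x1, r * x2, r * x3))"

definition K_bracket :: "'a::field \<times> 'a \<times> 'a \<Rightarrow> 'a \<times> 'a \<times> 'a \<Rightarrow> 'a \<times> 'a \<times> 'a" where
  "K_bracket x y = (case x of (x1, x2, x3) \<Rightarrow> case y of (y1, y2, y3) \<Rightarrow>
      (x1 * y3 - x3 * y1, x2 * y3 - x3 * y2, x1 * y2 - x2 * y1))"

definition K_a :: "'a::field \<times> 'a \<times> 'a" where "K_a = (1, 0, 0)"
definition K_b :: "'a::field \<times> 'a \<times> 'a" where "K_b = (0, 1, 0)"
definition K_c :: "'a::field \<times> 'a \<times> 'a" where "K_c = (0, 0, 1)"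

end

theory Submission
  imports Defs
begin

(* Let Q be a strong quasi-ideal: every line Fn \<subseteq> Q is a quasi-ideal, which amounts to
   [n,y] \<in> Fn + Fy for all y.  If Q is not a strong ideal, some line Fx0 \<subseteq> Q is not an
   ideal; then ad x0 acts on L/Fx0 as a nonzero scalar, and after rescaling we get x \<in> Q
   with [x,y] \<in> y + Fx for all y (a "unit element").  For such x, L = N \<oplus> Fx with
   N = {y. [x,y] = y}, and by the Jacobi identity [N,N] \<subseteq> Fx and 2[N,N] = 0.
   If N is abelian, L is almost abelian with L^2 = N.  Otherwise the characteristic is 2,
   N = Fa + Fb with [a,b] = x, and (a,b,x) \<mapsto> (a,b,c) is an isomorphism L \<cong> K; moreover
   no nonzero n \<in> N can lie in Q (Fn would not be a quasi-ideal), which forces Q = Fx.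

   The argument never uses finite
   dimensionality, so that hypothesis of the theorem stays idle. *)

lemma char_two:
  assumes "(1::'a::field) + 1 = 0"
  shows "CHAR('a) = 2"
proof (rule CHAR_eq_posI)
  show "of_nat 2 = (0::'a)" using assms by simp
  show "\<And>n. 0 < n \<Longrightarrow> n < 2 \<Longrightarrow> of_nat n \<noteq> (0::'a)"
    by (metis One_nat_def less_2_cases not_less_zero of_nat_1 one_neq_zero)
qed simp

locale lie = vector_space scale
  for scale :: "'a::field \<Rightarrow> 'v::ab_group_add \<Rightarrow> 'v" (infixr \<open>*s\<close> 75) +
  fixes br :: "'v \<Rightarrow> 'v \<Rightarrow> 'v"
  assumes addL: "br (x + y) z = br x z + br y z"
    and addR: "br x (y + z) = br x y + br x z"
    and scL: "br (r *s x) y = r *s (br x y)"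
    and scR: "br x (r *s y) = r *s (br x y)"
    and alt: "br x x = 0"
    and jac: "br x (br y z) + br y (br z x) + br z (br x y) = 0"
begin

lemma br0L[simp]: "br 0 y = 0" using addL[of 0 0 y] by simp
lemma br0R[simp]: "br x 0 = 0" using addR[of x 0 0] by simp

lemma brnegL[simp]: "br (- x) y = - br x y"
  using addL[of x "-x" y] by (simp add: eq_neg_iff_add_eq_0 add.commute)

lemma brnegR[simp]: "br x (- y) = - br x y"
  using addR[of x y "-y"] by (simp add: eq_neg_iff_add_eq_0 add.commute)

lemma brdiffL[simp]: "br (x - y) z = br x z - br y z"
  by (simp only: diff_conv_add_uminus addL brnegL)

lemma brdiffR[simp]: "br x (y - z) = br x y - br x z"
  by (simp only: diff_conv_add_uminus addR brnegR)

lemma anti: "br y x = - br x y"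
proof -
  have "br (x + y) (x + y) = br x x + br x y + (br y x + br y y)"
    by (simp only: addL addR ac_simps)
  then have "br x y + br y x = 0" by (simp add: alt)
  then show ?thesis by (metis add.commute eq_neg_iff_add_eq_0)
qed

lemmas brs[simp] = addL addR scL scR alt

lemma span1: "w \<in> span {x} \<longleftrightarrow> (\<exists>k. w = k *s x)"
  by (auto simp: span_singleton)

lemma span2: "w \<in> span {y, z} \<longleftrightarrow> (\<exists>a b. w = a *s y + b *s z)"
  by (simp add: span_breakdown_eq span1)
     (metis add.commute diff_add_cancel add_diff_cancel_left')

lemma solve1: "c \<noteq> 0 \<Longrightarrow> c *s y = a *s x \<Longrightarrow> y \<in> span {x}"
proof -
  assume c: "c \<noteq> 0" and e: "c *s y = a *s x"
  have "y = (1/c) *s (c *s y)" using c by simp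
  also have "\<dots> = (a / c) *s x" by (simp add: e)
  finally show ?thesis by (auto simp: span1)
qed

lemma solve2: "c \<noteq> 0 \<Longrightarrow> c *s y = a *s x + b *s z \<Longrightarrow> y \<in> span {x, z}"
proof -
  assume c: "c \<noteq> 0" and e: "c *s y = a *s x + b *s z"
  have "y = (1/c) *s (c *s y)" using c by simp
  also have "\<dots> = (a / c) *s x + (b / c) *s z" by (simp add: e scale_right_distrib)
  finally show ?thesis by (auto simp: span2)
qed

lemma dim_span1: "x \<noteq> 0 \<Longrightarrow> dim (span {x}) = 1"
  using independent_insertI[of x "{}"] by (simp add: dim_eq_card_independent)

lemma dim1_obtain:
  assumes "subspace W" "dim W = 1"
  obtains x where "x \<noteq> 0" "x \<in> W" "W = span {x}"
proof -
  obtain B where B: "B \<subseteq> W" "independent B" "W \<subseteq> span B" "card B = dim W"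
    using basis_exists by blast
  then have "card B = 1" using assms by simp
  then obtain x where x: "B = {x}" by (rule card_1_singletonE)
  have "x \<noteq> 0" using B(2) x dependent_zero by blast
  moreover have "x \<in> W" using B(1) x by blast
  moreover have "W = span {x}" using B(3) x span_minimal[of "{x}" W] assms(1) \<open>x \<in> W\<close> by blast
  ultimately show ?thesis using that by blast
qed

lemma line_image_K_c:
  assumes "\<forall>t. \<phi> (t *s x) = (0, 0, t)"
  shows "\<phi> ` span {x} = {K_scale t K_c | t. True}"
proof -
  have "\<phi> ` span {x} = range (\<lambda>t. \<phi> (t *s x))" by (auto simp: span1)
  also have "\<dots> = {K_scale t K_c | t. True}" using assms by (auto simp: K_scale_def K_c_def)
  finally show ?thesis .
qed

definition quasi_element :: "'v \<Rightarrow> bool" where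
  "quasi_element x \<longleftrightarrow> (\<forall>y. \<exists>t r. br x y = t *s x + r *s y)"

lemma quasi_ideal_line:
  assumes "quasi_ideal scale br (span {n})"
  shows "quasi_element n"
  unfolding quasi_element_def
proof
  fix y
  have "brk_sp scale br (span {n}) (span {y}) \<subseteq> sum_sp (span {n}) (span {y})"
    using assms unfolding quasi_ideal_def by blast
  moreover have "br n y \<in> brk_sp scale br (span {n}) (span {y})"
    unfolding brk_sp_def by (rule span_base) (auto intro: span_base)
  ultimately have "br n y \<in> sum_sp (span {n}) (span {y})" by blast
  then show "\<exists>t r. br n y = t *s n + r *s y" unfolding sum_sp_def span1 by blast
qed

lemma strong_quasi_ideal_elements:
  assumes Q: "strong_quasi_ideal scale br Q" and n: "n \<in> Q" "n \<noteq> 0"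
  shows "quasi_element n"
proof -
  have "subspace Q" using Q unfolding strong_quasi_ideal_def lie_subalgebra_def by blast
  then have "span {n} \<subseteq> Q" using n by (simp add: span_minimal)
  moreover have "lie_subalgebra scale br (span {n})"
    unfolding lie_subalgebra_def by (auto simp: span1)
  moreover have "dim (span {n}) = 1" using dim_span1 n by blast
  ultimately show ?thesis
    using Q quasi_ideal_line unfolding strong_quasi_ideal_def one_dim_subalgebras_def by blast
qed

text \<open>If the line Fx0 is a quasi-ideal but [x0,u] \<notin> Fx0, then ad x0 acts on L/Fx0 as one
  nonzero scalar r: the coefficient of y in [x0,y] cannot depend on y.\<close>
lemma quasi_element_scalar:
  assumes x0: "x0 \<noteq> 0" and q: "quasi_element x0" and u: "br x0 u \<notin> span {x0}"
  shows "\<exists>r. r \<noteq> 0 \<and> (\<forall>y. \<exists>t. br x0 y = r *s y + t *s x0)"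
proof -
  obtain t0 r where tr: "br x0 u = t0 *s x0 + r *s u" using q unfolding quasi_element_def by blast
  have r: "r \<noteq> 0" using tr u by (auto simp: span1)
  have un: "u \<notin> span {x0}" using u by (auto simp: span1 span_zero)
  have "\<exists>t. br x0 y = r *s y + t *s x0" for y
  proof (cases "y \<in> span {x0, u}")
    case True
    then obtain p q where y: "y = p *s x0 + q *s u" by (auto simp: span2)
    have "br x0 y = q *s br x0 u" by (simp add: y)
    also have "\<dots> = r *s y + (q * t0 - r * p) *s x0" by (simp add: tr y algebra_simps)
    finally show ?thesis by blast
  next
    case False
    obtain t1 r1 where 1: "br x0 y = t1 *s x0 + r1 *s y"
      using q unfolding quasi_element_def by blast
    obtain t2 r2 where 2: "br x0 (y + u) = t2 *s x0 + r2 *s (y + u)"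
      using q unfolding quasi_element_def by blast
    have eq: "(r1 - r2) *s y = (t2 - t1 - t0) *s x0 + (r2 - r) *s u"
      using 1 2 tr by (simp add: algebra_simps)
    have "r1 = r2" using solve2[OF _ eq] False by auto
    then have "(r - r2) *s u = (t2 - t1 - t0) *s x0" using eq by (simp add: algebra_simps)
    then have "r = r2" using solve1[of "r - r2" u] un by auto
    then show ?thesis using 1 \<open>r1 = r2\<close> by (metis add.commute)
  qed
  then show ?thesis using r by blast
qed

definition unit_element :: "'v \<Rightarrow> bool" where
  "unit_element x \<longleftrightarrow> x \<noteq> 0 \<and> (\<forall>y. \<exists>t. br x y = y + t *s x)"

lemma unit_element_in_strong_quasi_ideal:
  assumes Q: "strong_quasi_ideal scale br Q" and nQ: "\<not> strong_ideal scale br Q"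
  obtains x where "x \<in> Q" "unit_element x"
proof -
  obtain W where W: "W \<in> one_dim_subalgebras scale br Q" and nid: "\<not> lie_ideal scale br W"
    using Q nQ unfolding strong_ideal_def strong_quasi_ideal_def by blast
  have Qsub: "subspace Q" using Q unfolding strong_quasi_ideal_def lie_subalgebra_def by blast
  have Wsub: "subspace W" and Wdim: "dim W = 1" and WQ: "W \<subseteq> Q"
    using W unfolding one_dim_subalgebras_def lie_subalgebra_def by auto
  obtain x0 where x0: "x0 \<noteq> 0" "x0 \<in> W" "W = span {x0}" using dim1_obtain[OF Wsub Wdim] .
  have x0Q: "x0 \<in> Q" using x0 WQ by blast
  have "\<exists>u. br x0 u \<notin> span {x0}"
  proof (rule ccontr)
    assume "\<nexists>u. br x0 u \<notin> span {x0}"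
    then have all: "br x0 u \<in> span {x0}" for u by blast
    have "brk_sp scale br UNIV W \<subseteq> W"
      unfolding brk_sp_def x0(3)
    proof (rule span_minimal[OF _ subspace_span], safe)
      fix a v assume "v \<in> span {x0}"
      then obtain k where v: "v = k *s x0" by (auto simp: span1)
      have "br a v = (- k) *s br x0 a" unfolding v using anti[of a x0] by simp
      then show "br a v \<in> span {x0}" using span_scale[OF all[of a], of "-k"] by simp
    qed
    then show False using nid Wsub unfolding lie_ideal_def by blast
  qed
  then obtain u where "br x0 u \<notin> span {x0}" by blast
  then obtain r where r: "r \<noteq> 0" "\<forall>y. \<exists>t. br x0 y = r *s y + t *s x0"
    using quasi_element_scalar[OF x0(1) strong_quasi_ideal_elements[OF Q x0Q x0(1)]] by blast
  define x where "x = (1 / r) *s x0"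
  have "\<exists>t. br x y = y + t *s x" for y
  proof -
    obtain t where t: "br x0 y = r *s y + t *s x0" using r by blast
    have "br x y = y + t *s x" unfolding x_def using t r(1) by (simp add: algebra_simps)
    then show ?thesis by blast
  qed
  moreover have "x \<noteq> 0" unfolding x_def using x0 r by simp
  moreover have "x \<in> Q" unfolding x_def using x0Q Qsub by (simp add: subspace_def)
  ultimately show ?thesis using that unfolding unit_element_def by blast
qed

context
  fixes x assumes unit: "unit_element x"
begin

lemma xnz: "x \<noteq> 0" using unit unfolding unit_element_def by blast

lemma eigenspace_subspace: "subspace {y. br x y = y}"
  unfolding subspace_def by simp

lemma eigen_decomp: "\<exists>n t. br x n = n \<and> v = n + t *s x"
proof -
  obtain t where t: "br x v = v + t *s x" using unit unfolding unit_element_def by blast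
  have "br x (v + t *s x) = v + t *s x" by (simp add: t)
  moreover have "v = (v + t *s x) + (- t) *s x" by simp
  ultimately show ?thesis by blast
qed

lemma eigen_bracket:
  assumes y: "br x y = y" and z: "br x z = z"
  shows "\<exists>t. br y z = t *s x" and "br y z + br y z = 0"
proof -
  have "br x (br y z) + br y (br z x) + br z (br x y) = 0" by (rule jac)
  moreover have "br z x = - z" using z anti[of z x] by simp
  moreover have "br z y = - br y z" by (rule anti)
  ultimately have twice: "br x (br y z) = br y z + br y z" using y
    by (simp add: algebra_simps eq_neg_iff_add_eq_0)
  obtain t where t: "br x (br y z) = br y z + t *s x" using unit unfolding unit_element_def by blast
  have "br y z = t *s x" using twice t by simp
  then show "\<exists>t. br y z = t *s x" by blast
  have "br x (br y z) = 0" using \<open>br y z = t *s x\<close> by simp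
  then show "br y z + br y z = 0" using twice by simp
qed

text \<open>Case N abelian: L^2 = N, so L is almost abelian.\<close>
lemma abelian_eigenspace_almost_abelian:
  assumes ab: "\<forall>y z. br x y = y \<longrightarrow> br x z = z \<longrightarrow> br y z = 0"
  shows "almost_abelian scale br"
proof -
  let ?N = "{y. br x y = y}"
  have L2: "brk_sp scale br UNIV UNIV = ?N"
  proof
    show "brk_sp scale br UNIV UNIV \<subseteq> ?N"
      unfolding brk_sp_def
    proof (rule span_minimal[OF _ eigenspace_subspace], safe)
      fix u v
      obtain n1 t1 where 1: "br x n1 = n1" "u = n1 + t1 *s x" using eigen_decomp by blast
      obtain n2 t2 where 2: "br x n2 = n2" "v = n2 + t2 *s x" using eigen_decomp by blast
      have e: "br u v = t1 *s n2 - t2 *s n1"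
        using 1 2 ab anti[of n1 x] by (simp add: algebra_simps)
      show "br x (br u v) = br u v" unfolding e using 1(1) 2(1) by simp
    qed
    show "?N \<subseteq> brk_sp scale br UNIV UNIV"
    proof
      fix y assume "y \<in> ?N"
      then have "y = br x y" by simp
      then show "y \<in> brk_sp scale br UNIV UNIV" unfolding brk_sp_def by (intro span_base) blast
    qed
  qed
  have "sum_sp ?N (span {x}) = UNIV"
    unfolding sum_sp_def span1 using eigen_decomp by blast
  moreover have "?N \<inter> span {x} = {0}"
    by (auto simp: span1 xnz)
  ultimately show ?thesis
    unfolding almost_abelian_def Let_def L2 using ab by blast
qed

lemma nonabelian_eigenspace:
  assumes y: "br x y = y" and z: "br x z = z" and nz: "br y z \<noteq> 0"
  shows "(1::'a) + 1 = 0"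
    and "\<exists>a b. br x a = a \<and> br x b = b \<and> br a b = x \<and> {w. br x w = w} \<subseteq> span {a, b}"
proof -
  obtain t where t: "br y z = t *s x" using eigen_bracket[OF y z] by blast
  have tnz: "t \<noteq> 0" using t nz by auto
  have "(t + t) *s x = 0" using eigen_bracket(2)[OF y z] unfolding t by (simp only: scale_left_distrib)
  then have "(1 + 1) * t = 0" using xnz by (simp add: algebra_simps)
  then show "(1::'a) + 1 = 0" using tnz by simp
  define a where "a = (1 / t) *s y"
  have xa: "br x a = a" unfolding a_def using y by simp
  have az: "br a z = x" unfolding a_def using t tnz by simp
  have "w \<in> span {a, z}" if w: "br x w = w" for w
  proof -
    obtain s1 where s1: "br z w = s1 *s x" using eigen_bracket[OF z w] by blast
    obtain s2 where s2: "br w y = s2 *s x" using eigen_bracket[OF w y] by blast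
    have j: "br y (br z w) + br z (br w y) + br w (br y z) = 0" by (rule jac)
    have "br y x = - y" "br z x = - z" "br w x = - w"
      using y z w anti[of _ x] by simp_all
    then have "- (s1 *s y) - s2 *s z - t *s w = 0"
      using j unfolding s1 s2 t by simp
    then have "t *s w = (- s1 * t) *s a + (- s2) *s z"
      unfolding a_def using tnz by (simp add: algebra_simps eq_neg_iff_add_eq_0)
    then show ?thesis using solve2[OF tnz] by blast
  qed
  then show "\<exists>a b. br x a = a \<and> br x b = b \<and> br a b = x \<and> {w. br x w = w} \<subseteq> span {a, b}"
    using xa z az by blast
qed

text \<open>In the non-abelian case, the map (p1,p2,p3) \<mapsto> p1 a + p2 b + p3 x is an isomorphism
  K \<cong> L; its inverse sends x to c.\<close>
context
  fixes a b
  assumes xa: "br x a = a" and xb: "br x b = b" and ab: "br a b = x"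
    and N_plane: "{w. br x w = w} \<subseteq> span {a, b}"
begin

lemma frame_independent:
  assumes "p1 *s a + p2 *s b + p3 *s x = 0"
  shows "p1 = 0 \<and> p2 = 0 \<and> p3 = 0"
proof -
  have e1: "p1 *s a + p2 *s b = 0"
    using arg_cong[OF assms, of "br x"] xa xb by simp
  then have "p3 *s x = 0" using assms by simp
  then have p3: "p3 = 0" using xnz by simp
  have "p2 *s x = 0" using arg_cong[OF e1, of "br a"] ab by simp
  then have p2: "p2 = 0" using xnz by simp
  have "a \<noteq> 0" using ab xnz by auto
  then show ?thesis using e1 p2 p3 by simp
qed

lemma iso_K:
  assumes ch: "(1::'a) + 1 = 0"
  obtains \<phi> where "Vector_Spaces.linear scale K_scale \<phi>" "bij \<phi>"
    "\<forall>u v. \<phi> (br u v) = K_bracket (\<phi> u) (\<phi> v)" "\<forall>t. \<phi> (t *s x) = (0, 0, t)"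
proof -
  define \<psi> where "\<psi> p = (case p of (p1, p2, p3) \<Rightarrow> p1 *s a + p2 *s b + p3 *s x)" for p
  have vsK: "vector_space (K_scale :: 'a \<Rightarrow> _)"
    unfolding vector_space_def K_scale_def by (auto simp: algebra_simps)
  interpret P: vector_space_pair K_scale scale
    unfolding vector_space_pair_def using vsK vector_space_axioms by simp
  have lin: "Vector_Spaces.linear K_scale scale \<psi>"
    unfolding Vector_Spaces.linear_def module_hom_def module_hom_axioms_def module_iff_vector_space
    using vsK vector_space_axioms
    by (auto simp: \<psi>_def K_scale_def algebra_simps scale_right_distrib split: prod.splits)
  have inj: "inj \<psi>"
  proof (rule injI)
    fix p q :: "'a \<times> 'a \<times> 'a" assume e: "\<psi> p = \<psi> q"
    obtain p1 p2 p3 q1 q2 q3 where pq: "p = (p1, p2, p3)" "q = (q1, q2, q3)" by (cases p, cases q) auto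
    have "(p1 - q1) *s a + (p2 - q2) *s b + (p3 - q3) *s x = 0"
      using e unfolding pq \<psi>_def by (simp add: algebra_simps)
    then show "p = q" using frame_independent[of "p1 - q1" "p2 - q2" "p3 - q3"] pq by auto
  qed
  have surj: "surj \<psi>"
  proof -
    have "w \<in> range \<psi>" for w
    proof -
      obtain n t where w: "br x n = n" "w = n + t *s x" using eigen_decomp by blast
      have "n \<in> span {a, b}" using N_plane w(1) by blast
      then obtain \<alpha> \<beta> where "n = \<alpha> *s a + \<beta> *s b" by (auto simp: span2)
      then have "w = \<psi> (\<alpha>, \<beta>, t)" using w by (simp add: \<psi>_def)
      then show ?thesis by blast
    qed
    then show ?thesis by blast
  qed
  text \<open>In characteristic 2 the signs in the bracket of K are immaterial.\<close>
  have sign: "c - d = d - c" for c d :: 'a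
  proof -
    have "(c - d) - (d - c) = (c - d) * (1 + 1)" by (simp add: algebra_simps)
    then show ?thesis using ch by simp
  qed
  have K_char2: "K_bracket (p1, p2, p3) (q1, q2, q3) =
      (p3 * q1 - p1 * q3, p3 * q2 - p2 * q3, p1 * q2 - p2 * q1)" for p1 p2 p3 q1 q2 q3 :: 'a
    using sign[of "p1*q3" "p3*q1"] sign[of "p2*q3" "p3*q2"] by (simp add: K_bracket_def)
  have hom: "\<psi> (K_bracket p q) = br (\<psi> p) (\<psi> q)" for p q
  proof -
    obtain p1 p2 p3 q1 q2 q3 where pq: "p = (p1, p2, p3)" "q = (q1, q2, q3)" by (cases p, cases q) auto
    have "br a x = - a" "br b x = - b" "br b a = - x"
      using xa xb ab anti[of a x] anti[of b x] anti[of b a] by simp_all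
    then show ?thesis unfolding pq \<psi>_def K_char2
      by (simp add: xa xb ab algebra_simps)
  qed
  obtain \<phi> where \<phi>: "Vector_Spaces.linear scale K_scale \<phi>" "\<phi> \<circ> \<psi> = id"
    using P.linear_injective_left_inverse[OF lin inj] by blast
  have inv: "\<phi> (\<psi> p) = p" for p using \<phi>(2) by (metis comp_apply id_apply)
  have "bij \<phi>" using inv surj by (metis bij_betw_byWitness surj_f_inv_f UNIV_I subset_UNIV image_subsetI)
  moreover have "\<phi> (br u v) = K_bracket (\<phi> u) (\<phi> v)" for u v
    using surj hom inv by (metis surjD)
  moreover have "\<phi> (t *s x) = (0, 0, t)" for t
    using inv[of "(0, 0, t)"] by (simp add: \<psi>_def)
  ultimately show ?thesis using that \<phi>(1) by blast
qed

text \<open>A subalgebra through x whose nonzero elements all span quasi-ideal lines is Fx: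
  its N-component n = [x,q] would satisfy [n,a] \<notin> Fn + Fa or [n,b] \<notin> Fn + Fb.\<close>
lemma quasi_subalgebra_is_line:
  assumes Qsub: "subspace Q" and Qbr: "\<And>u v. u \<in> Q \<Longrightarrow> v \<in> Q \<Longrightarrow> br u v \<in> Q"
    and xQ: "x \<in> Q" and Qquasi: "\<And>n. n \<in> Q \<Longrightarrow> n \<noteq> 0 \<Longrightarrow> quasi_element n"
  shows "Q = span {x}"
proof
  show "span {x} \<subseteq> Q" using xQ Qsub by (simp add: span_minimal)
  show "Q \<subseteq> span {x}"
  proof
    fix q assume q: "q \<in> Q"
    obtain n t where n: "br x n = n" "q = n + t *s x" using eigen_decomp by blast
    have nQ: "n \<in> Q" using Qbr[OF xQ q] n by simp
    have "n = 0"
    proof (rule ccontr)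
      assume nn: "n \<noteq> 0"
      have "n \<in> span {a, b}" using N_plane n(1) by blast
      then obtain \<alpha> \<beta> where ne: "n = \<alpha> *s a + \<beta> *s b" by (auto simp: span2)
      text \<open>For w \<in> {a, b} with br n w = s x, s \<noteq> 0, quasi-ness puts s x into N.\<close>
      have no_line: False if w: "br x w = w" "br n w = s *s x" "s \<noteq> 0" for w s
      proof -
        obtain k l where "br n w = k *s n + l *s w"
          using Qquasi[OF nQ nn] unfolding quasi_element_def by blast
        then have "br x (s *s x) = s *s x" using w n(1) by simp
        then show False using w(3) xnz by simp
      qed
      have nb: "br n b = \<alpha> *s x" unfolding ne using ab by simp
      have na: "br n a = (- \<beta>) *s x" unfolding ne using ab anti[of b a] by simp
      show False
      proof (cases "\<alpha> = 0")
        case True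
        then have "\<beta> \<noteq> 0" using nn ne by auto
        then show False using no_line[OF xa na] by simp
      next
        case False
        then show False using no_line[OF xb nb] by simp
      qed
    qed
    then show "q \<in> span {x}" using n(2) by (simp add: span1)
  qed
qed

end

end

end

lemma lie_from_def:
  assumes "lie_algebra scale br"
  shows "lie scale br"
  using assms unfolding lie_algebra_def lie_def lie_axioms_def by blast

theorem lemma3p1:
  fixes scale :: "'a::field \<Rightarrow> 'v::ab_group_add \<Rightarrow> 'v"
    and br :: "'v \<Rightarrow> 'v \<Rightarrow> 'v"
    and Q :: "'v set"
  assumes "lie_algebra scale br"
    and "fin_dim scale"
    and "strong_quasi_ideal scale br Q"
  shows "strong_ideal scale br Q \<or> almost_abelian scale br \<or>
    (CHAR('a) = 2 \<and>
     (\<exists>\<phi> :: 'v \<Rightarrow> 'a \<times> 'a \<times> 'a.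
        Vector_Spaces.linear scale K_scale \<phi> \<and> bij \<phi> \<and>
        (\<forall>x y. \<phi> (br x y) = K_bracket (\<phi> x) (\<phi> y)) \<and>
        \<phi> ` Q = {K_scale t K_c | t. True}))"
proof -
  interpret lie scale br using lie_from_def[OF assms(1)] .
  have Qsa: "lie_subalgebra scale br Q" using assms(3) unfolding strong_quasi_ideal_def by blast
  show ?thesis
  proof (cases "strong_ideal scale br Q")
    case False
    then obtain x where xQ: "x \<in> Q" and x: "unit_element x"
      using unit_element_in_strong_quasi_ideal[OF assms(3)] by blast
    show ?thesis
    proof (cases "\<forall>y z. br x y = y \<longrightarrow> br x z = z \<longrightarrow> br y z = 0")
      case True
      then show ?thesis using abelian_eigenspace_almost_abelian[OF x] by blast
    next
      case False
      then obtain y z where yz: "br x y = y" "br x z = z" "br y z \<noteq> 0" by blast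
      note ch = nonabelian_eigenspace(1)[OF x yz]
      obtain a b where ab: "br x a = a" "br x b = b" "br a b = x" "{w. br x w = w} \<subseteq> span {a, b}"
        using nonabelian_eigenspace(2)[OF x yz] by blast
      obtain \<phi> where \<phi>: "Vector_Spaces.linear scale K_scale \<phi>" "bij \<phi>"
        "\<forall>u v. \<phi> (br u v) = K_bracket (\<phi> u) (\<phi> v)" "\<forall>t. \<phi> (scale t x) = (0, 0, t)"
        using iso_K[OF x ab ch] by blast
      have "Q = span {x}"
        using quasi_subalgebra_is_line[OF x ab _ _ xQ] Qsa strong_quasi_ideal_elements[OF assms(3)]
        unfolding lie_subalgebra_def by blast
      then have "\<phi> ` Q = {K_scale t K_c | t. True}"
        using line_image_K_c[OF \<phi>(4)] by simp
      then show ?thesis using char_two[OF ch] \<phi> by blast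
    qed
  qed simp
qed
end
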